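(* Let $p$ be an odd prime, $n\geq 2$, $1\leq s\leq p-1$, and $t$ an integer with $sp^{n-2}\leq t\leq p^{n-1}-1$. Then $\frac{(sp^{n-2})!}{t!}{t \brace sp^{n-2}}_{\leq p-1}\in\mathbb{Z}_{(p)}$ and \[\frac{(sp^{n-2})!}{t!}{t \brace sp^{n-2}}_{\leq p-1}\equiv \begin{cases}0 \pmod p, & \text{if } p^{n-2}\nmid t,\\ \frac{s!}{(t/p^{n-2})!}{t/p^{n-2} \brace s}\pmod p, & \text{if } p^{n-2}\mid t.\end{cases}\]
   Context: ${N \brace k}$ denotes the Stirling number of the second kind (number of partitions of an $N$-set into $k$ nonempty blocks). For $r\ge1$, the restricted Stirling number ${N \brace k}_{\leq r}$ is $\sum \frac{N!}{\prod_{m=1}^r j_m!(m!)^{j_m}}$ over $(j_1,\dots,j_r)\in\mathbb{N}^r$ with $\sum j_m=k$, $\sum m j_m=N$ (number of partitions of an $N$-set into $k$ nonempty blocks of size at most $r$). Congruences are in $\mathbb{Z}_{(p)}$. *)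

theory Defs
  imports Complex_Main "HOL-Combinatorics.Stirling" "HOL-Computational_Algebra.Primes"
begin

definition restricted_stirling :: "nat \<Rightarrow> nat \<Rightarrow> nat \<Rightarrow> rat" where
  "restricted_stirling r N k =
     (\<Sum>j\<in>{j :: nat \<Rightarrow> nat. (\<forall>m. m \<notin> {1..r} \<longrightarrow> j m = 0)
              \<and> (\<Sum>m=1..r. j m) = k \<and> (\<Sum>m=1..r. m * j m) = N}.
        fact N / (\<Prod>m=1..r. fact (j m) * fact m ^ j m))"

definition in_Zp :: "nat \<Rightarrow> rat \<Rightarrow> bool" where
  "in_Zp p x \<longleftrightarrow> (\<exists>a b :: int. \<not> int p dvd b \<and> x = of_int a / of_int b)"

definition cong_Zp :: "nat \<Rightarrow> rat \<Rightarrow> rat \<Rightarrow> bool" where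
  "cong_Zp p x y \<longleftrightarrow> in_Zp p x \<and> in_Zp p y \<and> in_Zp p ((x - y) / of_nat p)"

end

theory Submission
  imports Defs "HOL-Number_Theory.Number_Theory"
begin

text \<open>Put \<open>k = s p\<^sup>n\<^sup>-\<^sup>2\<close> and sort the partitions counted by the restricted Stirling number by
  their type \<open>j\<close>, where \<open>j m\<close> is the number of blocks of size \<open>m\<close>. Then \<open>k!/t!\<close> times the
  restricted Stirling number is the sum over all types of the multinomial coefficient
  \<open>(k; j 1, ..., j (p - 1))\<close> divided by \<open>\<Prod>m. (m!)\<^bsup>j m\<^esup>\<close>, a \<open>p\<close>-adic unit because \<open>m < p\<close>.
  By Lucas' theorem the multinomial coefficient vanishes modulo \<open>p\<close> unless \<open>p\<^sup>n\<^sup>-\<^sup>2\<close> divides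
  every \<open>j m\<close>, and then it is congruent to \<open>(s; j/p\<^sup>n\<^sup>-\<^sup>2)\<close>; by Fermat's little theorem the
  denominator does not change modulo \<open>p\<close> either. Since \<open>t = \<Sum>m. m j m\<close>, no type survives
  unless \<open>p\<^sup>n\<^sup>-\<^sup>2\<close> divides \<open>t\<close>, and then the survivors form the same sum for
  \<open>T = t/p\<^sup>n\<^sup>-\<^sup>2\<close> and \<open>s\<close>. As \<open>T < p\<close>, the size restriction is void for \<open>T\<close>,
  which leaves \<open>s!/T!\<close> times the ordinary Stirling number.\<close>

section \<open>The local ring \<open>\<int>\<^sub>(\<^sub>p\<^sub>)\<close>\<close>

lemma in_Zp_of_int: "prime p \<Longrightarrow> in_Zp p (of_int a)"
  unfolding in_Zp_def by (rule exI[of _ a], rule exI[of _ 1]) (auto simp: prime_nat_iff)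

lemma in_Zp_of_nat: "prime p \<Longrightarrow> in_Zp p (of_nat a)"
  using in_Zp_of_int[of p "int a"] by simp

lemma in_Zp_inverse_of_nat: "\<not> p dvd b \<Longrightarrow> in_Zp p (1 / of_nat b)"
  unfolding in_Zp_def by (rule exI[of _ 1], rule exI[of _ "int b"]) auto

lemma in_Zp_add:
  assumes "prime p" "in_Zp p x" "in_Zp p y"
  shows "in_Zp p (x + y)"
proof -
  obtain a b c d where ab: "\<not> int p dvd b" "x = of_int a / of_int b"
    and cd: "\<not> int p dvd d" "y = of_int c / of_int d"
    using assms(2,3) unfolding in_Zp_def by blast
  have "b \<noteq> 0" "d \<noteq> 0"
    using ab cd by auto
  then have "x + y = of_int (a * d + c * b) / of_int (b * d)"
    using ab cd by (simp add: field_simps)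
  moreover have "\<not> int p dvd b * d"
    using ab cd assms(1) by (simp add: prime_dvd_mult_iff)
  ultimately show ?thesis
    unfolding in_Zp_def by blast
qed

lemma in_Zp_mult:
  assumes "prime p" "in_Zp p x" "in_Zp p y"
  shows "in_Zp p (x * y)"
proof -
  obtain a b c d where ab: "\<not> int p dvd b" "x = of_int a / of_int b"
    and cd: "\<not> int p dvd d" "y = of_int c / of_int d"
    using assms(2,3) unfolding in_Zp_def by blast
  have "\<not> int p dvd b * d"
    using ab cd assms(1) by (simp add: prime_dvd_mult_iff)
  moreover have "x * y = of_int (a * c) / of_int (b * d)"
    using ab cd by simp
  ultimately show ?thesis
    unfolding in_Zp_def by blast
qed

lemma in_Zp_sum:
  assumes "prime p" "\<And>i. i \<in> S \<Longrightarrow> in_Zp p (f i)"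
  shows "in_Zp p (\<Sum>i\<in>S. f i)"
  using assms(2)
  by (induction S rule: infinite_finite_induct)
     (use in_Zp_of_int[OF assms(1), of 0] in_Zp_add[OF assms(1)] in auto)

lemma cong_Zp_refl: "prime p \<Longrightarrow> in_Zp p x \<Longrightarrow> cong_Zp p x x"
  unfolding cong_Zp_def using in_Zp_of_int[of p 0] by simp

lemma cong_Zp_add:
  assumes "prime p" "cong_Zp p x x'" "cong_Zp p y y'"
  shows "cong_Zp p (x + y) (x' + y')"
proof -
  have "(x + y - (x' + y')) / of_nat p = (x - x') / of_nat p + (y - y') / of_nat p"
    by (simp add: diff_divide_distrib add_divide_distrib)
  then show ?thesis
    using assms unfolding cong_Zp_def by (simp add: in_Zp_add)
qed

lemma cong_Zp_mult:
  assumes "prime p" "cong_Zp p x x'" "cong_Zp p y y'"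
  shows "cong_Zp p (x * y) (x' * y')"
proof -
  have "(x * y - x' * y') / of_nat p = (x - x') / of_nat p * y + x' * ((y - y') / of_nat p)"
    by (cases "p = 0") (simp_all add: field_simps)
  moreover have "in_Zp p ((x - x') / of_nat p * y + x' * ((y - y') / of_nat p))"
    using assms unfolding cong_Zp_def by (blast intro: in_Zp_add in_Zp_mult)
  ultimately show ?thesis
    using assms unfolding cong_Zp_def by (simp add: in_Zp_mult)
qed

lemma cong_Zp_sum:
  assumes "prime p" "\<And>i. i \<in> S \<Longrightarrow> cong_Zp p (f i) (g i)"
  shows "cong_Zp p (\<Sum>i\<in>S. f i) (\<Sum>i\<in>S. g i)"
  using assms(2)
  by (induction S rule: infinite_finite_induct)
     (use cong_Zp_refl[OF assms(1)] in_Zp_of_int[OF assms(1), of 0] cong_Zp_add[OF assms(1)]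
      in auto)

lemma cong_Zp_of_nat:
  assumes "prime p" "[a = b] (mod p)"
  shows "cong_Zp p (of_nat a) (of_nat b)"
proof -
  have "int p dvd int a - int b"
    using assms(2) by (metis cong_iff_dvd_diff cong_int_iff)
  then obtain c where c: "int a - int b = int p * c" ..
  have "(of_nat a - of_nat b :: rat) = of_int (int a - int b)"
    by simp
  then have quotient: "(of_nat a - of_nat b) / of_nat p = (of_int c :: rat)"
    using c prime_gt_0_nat[OF assms(1)] by simp
  show ?thesis
    unfolding cong_Zp_def quotient using in_Zp_of_nat[OF assms(1)] in_Zp_of_int[OF assms(1)] by blast
qed

lemma cong_Zp_inverse_of_nat:
  assumes "prime p" "[a = b] (mod p)" "\<not> p dvd a"
  shows "cong_Zp p (1 / of_nat a) (1 / of_nat b)"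
proof -
  have "\<not> p dvd b"
    using assms(2,3) cong_dvd_iff by blast
  then have "\<not> p dvd a * b"
    using assms(1,3) by (simp add: prime_dvd_mult_iff)
  have "a \<noteq> 0" "b \<noteq> 0"
    using assms(3) \<open>\<not> p dvd b\<close> by (metis dvd_0_right)+
  have "cong_Zp p (of_nat b) (of_nat a)"
    using cong_Zp_of_nat[OF assms(1)] assms(2) by (simp add: cong_sym_eq)
  then have "in_Zp p ((of_nat b - of_nat a) / of_nat p)"
    unfolding cong_Zp_def by blast
  moreover have "in_Zp p (1 / of_nat (a * b))"
    using \<open>\<not> p dvd a * b\<close> by (rule in_Zp_inverse_of_nat)
  moreover have "(1 / of_nat a - 1 / of_nat b) / of_nat p
      = (of_nat b - of_nat a) / of_nat p * (1 / of_nat (a * b) :: rat)"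
    using \<open>a \<noteq> 0\<close> \<open>b \<noteq> 0\<close> by (simp add: field_simps)
  ultimately have "in_Zp p ((1 / of_nat a - 1 / of_nat b) / of_nat p)"
    by (metis in_Zp_mult[OF assms(1)])
  then show ?thesis
    unfolding cong_Zp_def using in_Zp_inverse_of_nat assms(3) \<open>\<not> p dvd b\<close> by blast
qed

section \<open>Binomial and multinomial coefficients modulo a prime\<close>

lemma prime_dvd_binomial_prime_power:
  assumes "prime p" "0 < x" "x < p ^ e"
  shows "p dvd (p ^ e choose x)"
proof (rule ccontr)
  assume "\<not> p dvd (p ^ e choose x)"
  then have "coprime (p ^ e) (p ^ e choose x)"
    using assms(1) by (simp add: prime_imp_coprime)
  moreover have "p ^ e dvd x * (p ^ e choose x)"
    using times_binomial_minus1_eq[OF assms(2)] by simp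
  ultimately have "p ^ e dvd x"
    using coprime_dvd_mult_left_iff by blast
  then show False
    using assms(2,3) by (simp add: nat_dvd_not_less)
qed

lemma binomial_add_prime_power_cong:
  assumes "prime p"
  shows "[(m + p ^ e) choose b = (m choose b) + (if p ^ e \<le> b then m choose (b - p ^ e) else 0)] (mod p)"
proof -
  define q where "q = p ^ e"
  have q: "q > 0"
    using assms by (simp add: q_def prime_gt_0_nat)
  define \<delta> :: "nat \<Rightarrow> nat" where "\<delta> x = (if x = 0 \<or> x = q then 1 else 0)" for x
  have "[q choose x = \<delta> x] (mod p)" for x
  proof -
    consider "x = 0 \<or> x = q" | "0 < x \<and> x < q" | "q < x" by linarith
    then show ?thesis
      using prime_dvd_binomial_prime_power[OF assms, of x e]
      by cases (auto simp: \<delta>_def q_def cong_0_iff binomial_eq_0)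
  qed
  then have "[(\<Sum>i\<le>b. (m choose i) * (q choose (b - i))) = (\<Sum>i\<le>b. (m choose i) * \<delta> (b - i))] (mod p)"
    by (intro cong_sum cong_mult cong_refl)
  moreover have "(\<Sum>i\<le>b. (m choose i) * \<delta> (b - i))
      = (\<Sum>i\<le>b. (if i = b then m choose i else 0) + (if q \<le> b \<and> i = b - q then m choose i else 0))"
    by (rule sum.cong) (use q in \<open>auto simp: \<delta>_def\<close>)
  moreover have "\<dots> = (m choose b) + (if q \<le> b then m choose (b - q) else 0)"
    by (cases "q \<le> b") (simp_all add: sum.distrib)
  ultimately show ?thesis
    using vandermonde[of m q b] unfolding q_def[symmetric] by simp
qed

lemma binomial_mult_prime_power_cong:
  assumes "prime p"
  shows "[(a * p ^ e) choose b = (if p ^ e dvd b then a choose (b div p ^ e) else 0)] (mod p)"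
proof (induction a arbitrary: b)
  case 0
  have "0 < b div p ^ e" if "p ^ e dvd b" "0 < b"
    using that by (metis dvd_div_eq_0_iff gr0I)
  then show ?case
    by (cases "b = 0") (auto simp: binomial_eq_0)
next
  case (Suc a)
  define q where "q = p ^ e"
  have q: "q > 0"
    using assms by (simp add: q_def prime_gt_0_nat)
  have "[(Suc a * q) choose b = ((a * q) choose b) + (if q \<le> b then (a * q) choose (b - q) else 0)] (mod p)"
    using binomial_add_prime_power_cong[OF assms, of "a * q" e b] unfolding q_def
    by (simp add: add.commute)
  also have "[((a * q) choose b) + (if q \<le> b then (a * q) choose (b - q) else 0)
      = (if q dvd b then a choose (b div q) else 0)
      + (if q \<le> b then if q dvd (b - q) then a choose ((b - q) div q) else 0 else 0)] (mod p)"
    using Suc.IH[of b] Suc.IH[of "b - q"] unfolding q_def by (intro cong_add) auto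
  also have "(if q dvd b then a choose (b div q) else 0)
      + (if q \<le> b then if q dvd (b - q) then a choose ((b - q) div q) else 0 else 0)
      = (if q dvd b then Suc a choose (b div q) else 0)"
  proof (cases "q dvd b")
    case True
    then obtain c where "b = q * c" ..
    with q show ?thesis
      by (cases c) (auto simp: diff_mult_distrib2[of q _ 1, simplified])
  next
    case False
    have "\<not> q dvd (b - q)" if "q \<le> b"
      using False that by (metis dvd_add_triv_right_iff le_add_diff_inverse2)
    with False show ?thesis
      by simp
  qed
  finally show ?case
    unfolding q_def .
qed

definition multinomial :: "'a set \<Rightarrow> ('a \<Rightarrow> nat) \<Rightarrow> nat" where
  "multinomial S j = fact (\<Sum>i\<in>S. j i) div (\<Prod>i\<in>S. fact (j i))"

lemma prod_fact_dvd_fact_sum: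
  "finite S \<Longrightarrow> (\<Prod>i\<in>S. fact (j i)) dvd (fact (\<Sum>i\<in>S. j i) :: nat)"
proof (induction S rule: finite_induct)
  case (insert a S)
  then have "fact (j a) * (\<Prod>i\<in>S. fact (j i)) dvd (fact (j a) * fact (\<Sum>i\<in>S. j i) :: nat)"
    by (simp add: mult_dvd_mono)
  also have "\<dots> dvd fact (j a + (\<Sum>i\<in>S. j i))"
    by (rule fact_fact_dvd_fact)
  finally show ?case
    using insert.hyps by simp
qed simp

lemma fact_sum_eq_multinomial_mult:
  "finite S \<Longrightarrow> fact (\<Sum>i\<in>S. j i) = multinomial S j * (\<Prod>i\<in>S. fact (j i))"
  unfolding multinomial_def by (metis prod_fact_dvd_fact_sum dvd_div_mult_self)

lemma multinomial_insert:
  assumes "finite S" "a \<notin> S"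
  shows "multinomial (insert a S) j = ((j a + (\<Sum>i\<in>S. j i)) choose j a) * multinomial S j"
proof -
  have "fact (j a + (\<Sum>i\<in>S. j i))
      = ((j a + (\<Sum>i\<in>S. j i)) choose j a) * multinomial S j * (fact (j a) * (\<Prod>i\<in>S. fact (j i)))"
    using binomial_fact_lemma[of "j a" "j a + (\<Sum>i\<in>S. j i)"] fact_sum_eq_multinomial_mult[OF assms(1), of j]
    by (simp add: algebra_simps)
  then show ?thesis
    using assms by (simp add: multinomial_def)
qed

lemma multinomial_scale_prime_power_cong:
  assumes "prime p" "finite S"
  shows "[multinomial S (\<lambda>i. p ^ e * j i) = multinomial S j] (mod p)"
  using assms(2)
proof (induction S rule: finite_induct)
  case empty
  then show ?case
    by (simp add: multinomial_def)
next
  case (insert a S)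
  have "(p ^ e * j a + (\<Sum>i\<in>S. p ^ e * j i)) choose (p ^ e * j a)
      = ((j a + (\<Sum>i\<in>S. j i)) * p ^ e) choose (p ^ e * j a)"
    by (simp add: sum_distrib_right[symmetric] algebra_simps)
  also have "[\<dots> = (j a + (\<Sum>i\<in>S. j i)) choose j a] (mod p)"
    using binomial_mult_prime_power_cong[OF assms(1), of "j a + (\<Sum>i\<in>S. j i)" e "p ^ e * j a"]
      prime_gt_0_nat[OF assms(1)] by simp
  finally show ?case
    using insert by (simp add: multinomial_insert cong_mult)
qed

lemma prime_dvd_multinomial:
  assumes "prime p" "finite S" "p ^ e dvd (\<Sum>i\<in>S. j i)" "\<exists>i\<in>S. \<not> p ^ e dvd j i"
  shows "p dvd multinomial S j"
  using assms(2-)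
proof (induction S rule: finite_induct)
  case (insert a S)
  show ?case
  proof (cases "p ^ e dvd j a")
    case True
    have "p ^ e dvd (\<Sum>i\<in>S. j i)"
      using insert.prems(1) insert.hyps True by (simp add: dvd_add_right_iff)
    moreover have "\<exists>i\<in>S. \<not> p ^ e dvd j i"
      using insert.prems(2) True by auto
    ultimately have "p dvd multinomial S j"
      by (rule insert.IH)
    then show ?thesis
      using insert.hyps by (simp add: multinomial_insert)
  next
    case False
    obtain c where "j a + (\<Sum>i\<in>S. j i) = p ^ e * c"
      using insert.prems(1) insert.hyps by auto
    then have "p dvd ((j a + (\<Sum>i\<in>S. j i)) choose j a)"
      using binomial_mult_prime_power_cong[OF assms(1), of c e "j a"] False
      by (simp add: cong_0_iff mult.commute)
    then show ?thesis
      using insert.hyps by (simp add: multinomial_insert)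
  qed
qed simp

section \<open>Restricted Stirling numbers\<close>

lemma Stirling_Suc_Suc_sum: "Stirling (Suc N) (Suc k) = (\<Sum>i\<le>N. (N choose i) * Stirling i k)"
proof (induction N arbitrary: k)
  case 0
  then show ?case
    by (cases k) auto
next
  case (Suc N)
  have pascal: "(\<Sum>i\<le>Suc N. (Suc N choose i) * Stirling i k)
      = (\<Sum>i\<le>Suc N. (N choose i) * Stirling i k) + (\<Sum>i\<le>N. (N choose i) * Stirling (Suc i) k)"
    by (simp only: sum.atMost_Suc_shift) (simp add: sum.distrib distrib_right)
  have shifted: "(\<Sum>i\<le>N. (N choose i) * Stirling (Suc i) k) = k * Stirling (Suc N) (Suc k) + Stirling (Suc N) k"
  proof (cases k)
    case (Suc k')
    then show ?thesis
      using Suc.IH[of k] Suc.IH[of k'] by (simp add: sum_distrib_left sum.distrib algebra_simps)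
  qed simp
  show ?case
    unfolding pascal shifted using Suc.IH[of k] by simp
qed

definition block_types :: "nat \<Rightarrow> nat \<Rightarrow> nat \<Rightarrow> (nat \<Rightarrow> nat) set" where
  "block_types r N k = {j. (\<forall>m. m \<notin> {1..r} \<longrightarrow> j m = 0)
     \<and> (\<Sum>m=1..r. j m) = k \<and> (\<Sum>m=1..r. m * j m) = N}"

definition block_type_weight :: "nat \<Rightarrow> (nat \<Rightarrow> nat) \<Rightarrow> rat" where
  "block_type_weight r j = 1 / (\<Prod>m=1..r. fact (j m) * fact m ^ j m)"

lemma restricted_stirling_altdef:
  "restricted_stirling r N k = fact N * (\<Sum>j\<in>block_types r N k. block_type_weight r j)"
  unfolding restricted_stirling_def block_types_def block_type_weight_def sum_distrib_left by simp

lemma finite_block_types: "finite (block_types r N k)"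
proof -
  have "j m \<le> k" if "j \<in> block_types r N k" "m \<in> {1..r}" for j m
    using that member_le_sum[of m "{1..r}" j] by (simp add: block_types_def)
  then have "block_types r N k \<subseteq> {j. \<forall>m. (m \<in> {1..r} \<longrightarrow> j m \<in> {0..k}) \<and> (m \<notin> {1..r} \<longrightarrow> j m = 0)}"
    by (auto simp: block_types_def)
  moreover have "finite {j. \<forall>m. (m \<in> {1..r} \<longrightarrow> j m \<in> {0..k}) \<and> (m \<notin> {1..r} \<longrightarrow> j m = (0::nat))}"
    by (rule finite_set_of_finite_funs) auto
  ultimately show ?thesis
    using finite_subset by blast
qed

lemma sum_fun_upd_Suc:
  fixes c j :: "'a \<Rightarrow> nat"
  assumes "finite A" "m \<in> A"
  shows "(\<Sum>i\<in>A. c i * (j(m := Suc (j m))) i) = (\<Sum>i\<in>A. c i * j i) + c m"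
proof -
  have "(\<Sum>i\<in>A - {m}. c i * (j(m := Suc (j m))) i) = (\<Sum>i\<in>A - {m}. c i * j i)"
    by (rule sum.cong) auto
  then show ?thesis
    using sum.remove[OF assms, of "\<lambda>i. c i * (j(m := Suc (j m))) i"] sum.remove[OF assms, of "\<lambda>i. c i * j i"]
    by simp
qed

lemma block_type_weight_add_block:
  assumes "m \<in> {1..r}"
  shows "block_type_weight r (j(m := Suc (j m))) * (of_nat (Suc (j m)) * fact m) = block_type_weight r j"
proof -
  define g where "g i x = (fact x * fact i ^ x :: rat)" for i x
  define c where "c = (of_nat (Suc (j m)) * fact m :: rat)"
  define rest where "rest = (\<Prod>i\<in>{1..r} - {m}. g i (j i))"
  have "(\<Prod>i=1..r. g i ((j(m := Suc (j m))) i)) = g m (Suc (j m)) * rest"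
  proof -
    have "(\<Prod>i\<in>{1..r} - {m}. g i ((j(m := Suc (j m))) i)) = rest"
      unfolding rest_def by (rule prod.cong) auto
    then show ?thesis
      using prod.remove[OF _ assms, of "\<lambda>i. g i ((j(m := Suc (j m))) i)"] by simp
  qed
  moreover have "g m (Suc (j m)) = g m (j m) * c"
    by (simp add: g_def c_def algebra_simps)
  moreover have "(\<Prod>i=1..r. g i (j i)) = g m (j m) * rest"
    unfolding rest_def by (rule prod.remove) (use assms in auto)
  moreover have "g m (j m) \<noteq> 0" "rest \<noteq> 0" "c \<noteq> 0"
    by (simp_all add: g_def rest_def c_def)
  ultimately show ?thesis
    unfolding block_type_weight_def g_def[symmetric] c_def[symmetric] by simp
qed

text \<open>Removing one block of size \<open>m\<close> maps the types of \<open>N + 1\<close> with \<open>k + 1\<close> blocks and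
  \<open>j m > 0\<close> bijectively onto the types of \<open>N + 1 - m\<close> with \<open>k\<close> blocks; the factor \<open>m j m\<close>
  accounts for the choice of the removed block.\<close>

lemma sum_block_types_remove_block:
  assumes m: "m \<in> {1..r}" "m \<le> Suc N"
  shows "(\<Sum>j\<in>block_types r (Suc N - m) k. block_type_weight r j) / fact (m - 1)
    = (\<Sum>j\<in>block_types r (Suc N) (Suc k). of_nat (m * j m) * block_type_weight r j)"
proof -
  define B where "B = {j \<in> block_types r (Suc N) (Suc k). 0 < j m}"
  have sums: "(\<Sum>i=1..r. (j(m := Suc (j m))) i) = (\<Sum>i=1..r. j i) + 1"
    "(\<Sum>i=1..r. i * (j(m := Suc (j m))) i) = (\<Sum>i=1..r. i * j i) + m" for j
    using sum_fun_upd_Suc[OF _ m(1), of "\<lambda>_. 1" j] sum_fun_upd_Suc[OF _ m(1), of "\<lambda>i. i" j] by simp_all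
  have fact_m: "(fact m :: rat) = of_nat m * fact (m - 1)"
    using m(1) by (simp add: fact_reduce)
  have "(\<Sum>j\<in>block_types r (Suc N - m) k. block_type_weight r j) / fact (m - 1)
      = (\<Sum>j\<in>block_types r (Suc N - m) k. block_type_weight r j / fact (m - 1))"
    by (simp add: sum_divide_distrib)
  also have "\<dots> = (\<Sum>j\<in>B. of_nat (m * j m) * block_type_weight r j)"
  proof -
    define add where "add j = j(m := Suc (j m))" for j :: "nat \<Rightarrow> nat"
    define remove where "remove j = j(m := j m - 1)" for j :: "nat \<Rightarrow> nat"
    have add_mem: "add j \<in> B" if "j \<in> block_types r (Suc N - m) k" for j
      using that m sums[of j] by (auto simp: add_def B_def block_types_def)
    have add_remove: "add (remove j) = j" if "j \<in> B" for j
      using that by (auto simp: add_def remove_def B_def)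
    have remove_mem: "remove j \<in> block_types r (Suc N - m) k" if "j \<in> B" for j
      using that add_remove[OF that] m sums[of "remove j"]
      by (auto simp: add_def remove_def B_def block_types_def)
    have remove_add: "remove (add j) = j" for j
      by (simp add: add_def remove_def)
    have weight: "of_nat m * of_nat (add j m) * block_type_weight r (add j) = block_type_weight r j / fact (m - 1)" for j
      using block_type_weight_add_block[OF m(1), of j] m(1)
      by (simp add: add_def fact_m field_simps)
    show ?thesis
      by (rule sum.reindex_bij_witness[of _ remove add])
         (simp_all add: add_mem remove_mem add_remove remove_add weight)
  qed
  also have "\<dots> = (\<Sum>j\<in>block_types r (Suc N) (Suc k). of_nat (m * j m) * block_type_weight r j)"
    by (rule sum.mono_neutral_left) (auto simp: B_def finite_block_types)
  finally show ?thesis .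
qed

lemma sum_block_sizes_min:
  assumes "j \<in> block_types r N k"
  shows "(\<Sum>m=1..min r N. m * j m) = N"
proof -
  have "j m = 0" if "m \<in> {1..r}" "N < m" for m
  proof (rule ccontr)
    assume "j m \<noteq> 0"
    then have "m \<le> m * j m"
      by simp
    also have "\<dots> \<le> N"
      using that(1) assms member_le_sum[of m "{1..r}" "\<lambda>m. m * j m"] by (simp add: block_types_def)
    finally show False
      using that(2) by simp
  qed
  then have "(\<Sum>m=1..min r N. m * j m) = (\<Sum>m=1..r. m * j m)"
    by (intro sum.mono_neutral_left) auto
  then show ?thesis
    using assms by (simp add: block_types_def)
qed

lemma sum_block_type_weight_Suc_Suc:
  "of_nat (Suc N) * (\<Sum>j\<in>block_types r (Suc N) (Suc k). block_type_weight r j)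
    = (\<Sum>m=1..min r (Suc N). (\<Sum>j\<in>block_types r (Suc N - m) k. block_type_weight r j) / fact (m - 1))"
proof -
  let ?w = "block_type_weight r"
  have "of_nat (Suc N) * ?w j = (\<Sum>m=1..min r (Suc N). of_nat (m * j m) * ?w j)"
    if "j \<in> block_types r (Suc N) (Suc k)" for j
  proof -
    have "of_nat (Suc N) * ?w j = of_nat (\<Sum>m=1..min r (Suc N). m * j m) * ?w j"
      by (simp only: sum_block_sizes_min[OF that])
    also have "\<dots> = (\<Sum>m=1..min r (Suc N). of_nat (m * j m) * ?w j)"
      by (simp add: sum_distrib_right)
    finally show ?thesis .
  qed
  then have "of_nat (Suc N) * (\<Sum>j\<in>block_types r (Suc N) (Suc k). ?w j)
      = (\<Sum>j\<in>block_types r (Suc N) (Suc k). \<Sum>m=1..min r (Suc N). of_nat (m * j m) * ?w j)"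
    by (simp add: sum_distrib_left)
  also have "\<dots> = (\<Sum>m=1..min r (Suc N). \<Sum>j\<in>block_types r (Suc N) (Suc k). of_nat (m * j m) * ?w j)"
    by (rule sum.swap)
  also have "\<dots> = (\<Sum>m=1..min r (Suc N). (\<Sum>j\<in>block_types r (Suc N - m) k. ?w j) / fact (m - 1))"
    by (intro sum.cong refl) (rule sum_block_types_remove_block[symmetric]; auto)
  finally show ?thesis .
qed

text \<open>Here \<open>m\<close> is the size of the block containing the last element.\<close>

lemma restricted_stirling_Suc_Suc:
  "restricted_stirling r (Suc N) (Suc k)
    = (\<Sum>m=1..min r (Suc N). of_nat (N choose (m - 1)) * restricted_stirling r (Suc N - m) k)"
proof -
  have "restricted_stirling r (Suc N) (Suc k)
      = fact N * (of_nat (Suc N) * (\<Sum>j\<in>block_types r (Suc N) (Suc k). block_type_weight r j))"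
    by (simp add: restricted_stirling_altdef)
  also have "\<dots> = (\<Sum>m=1..min r (Suc N).
      fact N * ((\<Sum>j\<in>block_types r (Suc N - m) k. block_type_weight r j) / fact (m - 1)))"
    unfolding sum_block_type_weight_Suc_Suc by (simp only: sum_distrib_left)
  also have "\<dots> = (\<Sum>m=1..min r (Suc N). of_nat (N choose (m - 1)) * restricted_stirling r (Suc N - m) k)"
  proof (rule sum.cong)
    fix m assume "m \<in> {1..min r (Suc N)}"
    then have "N - (m - 1) = Suc N - m" "m - 1 \<le> N"
      by auto
    then have "(of_nat (N choose (m - 1)) :: rat) = fact N / (fact (m - 1) * fact (Suc N - m))"
      using binomial_fact[of "m - 1" N] by simp
    then show "fact N * ((\<Sum>j\<in>block_types r (Suc N - m) k. block_type_weight r j) / fact (m - 1))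
        = of_nat (N choose (m - 1)) * restricted_stirling r (Suc N - m) k"
      by (simp add: restricted_stirling_altdef)
  qed simp
  finally show ?thesis .
qed

lemma restricted_stirling_0_left: "restricted_stirling r 0 k = (if k = 0 then 1 else 0)"
proof -
  have "j = (\<lambda>_. 0)" if "j \<in> block_types r 0 k" for j
  proof
    fix m
    show "j m = 0"
      using that by (cases "m \<in> {1..r}") (auto simp: block_types_def)
  qed
  then have "block_types r 0 k = (if k = 0 then {\<lambda>_. 0} else {})"
    by (auto simp: block_types_def)
  then show ?thesis
    by (simp add: restricted_stirling_altdef block_type_weight_def)
qed

lemma restricted_stirling_Suc_0: "restricted_stirling r (Suc N) 0 = 0"
proof -
  have "block_types r (Suc N) 0 = {}"
    by (auto simp: block_types_def)
  then show ?thesis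
    by (simp add: restricted_stirling_altdef)
qed

lemma restricted_stirling_eq_Stirling:
  "N \<le> r \<Longrightarrow> restricted_stirling r N k = of_nat (Stirling N k)"
proof (induction N arbitrary: k rule: less_induct)
  case (less N)
  consider "N = 0" | N' where "N = Suc N'" "k = 0" | N' k' where "N = Suc N'" "k = Suc k'"
    by (cases N; cases k) auto
  then show ?case
  proof cases
    case 3
    have "restricted_stirling r (Suc N') (Suc k')
        = (\<Sum>m=1..Suc N'. of_nat ((N' choose (m - 1)) * Stirling (Suc N' - m) k'))"
      using less 3 by (simp add: restricted_stirling_Suc_Suc min_absorb2)
    also have "\<dots> = (\<Sum>i\<le>N'. of_nat ((N' choose i) * Stirling i k'))"
    proof -
      have "N' choose (m - 1) = N' choose (Suc N' - m)" if "m \<in> {1..Suc N'}" for m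
        using that binomial_symmetric[of "m - 1" N'] by auto
      then show ?thesis
        by (intro sum.reindex_bij_witness[of _ "\<lambda>i. Suc N' - i" "\<lambda>m. Suc N' - m"]) auto
    qed
    finally show ?thesis
      using 3 by (simp add: Stirling_Suc_Suc_sum del: Stirling.simps)
  qed (simp_all add: restricted_stirling_0_left restricted_stirling_Suc_0)
qed

section \<open>Reduction modulo \<open>p\<close>\<close>

lemma power_prime_cong: "prime p \<Longrightarrow> [x ^ p = x] (mod p)" for x :: nat
proof (cases "p dvd x")
  case True
  assume "prime p"
  then have "p dvd x ^ p"
    using True by (metis dvd_power dvd_trans prime_gt_0_nat)
  with True show ?thesis
    by (simp add: cong_def dvd_eq_mod_eq_0)
next
  case False
  assume "prime p"
  then have "[x * x ^ (p - 1) = x * 1] (mod p)"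
    using False by (intro cong_mult cong_refl fermat_theorem)
  with \<open>prime p\<close> show ?thesis
    by (simp add: power_eq_if prime_gt_0_nat)
qed

lemma power_prime_power_cong: "prime p \<Longrightarrow> [x ^ (p ^ e) = x] (mod p)" for x :: nat
proof (induction e)
  case (Suc e)
  have "x ^ (p ^ Suc e) = (x ^ (p ^ e)) ^ p"
    by (simp add: power_mult[symmetric] mult.commute)
  also have "[\<dots> = x ^ (p ^ e)] (mod p)"
    using Suc.prems by (rule power_prime_cong)
  also have "[x ^ (p ^ e) = x] (mod p)"
    using Suc by simp
  finally show ?case .
qed simp

lemma prime_not_dvd_prod_fact_power:
  assumes "prime p"
  shows "\<not> p dvd (\<Prod>m=1..p-1. fact m ^ j m :: nat)"
proof
  assume "p dvd (\<Prod>m=1..p-1. fact m ^ j m :: nat)"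
  then obtain m where "m \<in> {1..p-1}" "p dvd (fact m :: nat)"
    using assms by (auto simp: prime_dvd_prod_iff dest: prime_dvd_power)
  then show False
    using assms prime_dvd_fact_iff prime_gt_0_nat by fastforce
qed

definition block_type_coeff :: "nat \<Rightarrow> (nat \<Rightarrow> nat) \<Rightarrow> rat" where
  "block_type_coeff r j = of_nat (multinomial {1..r} j) / of_nat (\<Prod>m=1..r. fact m ^ j m)"

lemma fact_mult_block_type_weight:
  "fact (\<Sum>m=1..r. j m) * block_type_weight r j = block_type_coeff r j"
proof -
  have "(fact (\<Sum>m=1..r. j m) :: rat) = of_nat (multinomial {1..r} j * (\<Prod>m=1..r. fact (j m)))"
    by (metis fact_sum_eq_multinomial_mult finite_atLeastAtMost of_nat_fact)
  moreover have "(\<Prod>m=1..r. fact (j m) :: rat) \<noteq> 0"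
    by simp
  ultimately show ?thesis
    unfolding block_type_weight_def block_type_coeff_def by (simp add: prod.distrib)
qed

lemma scaled_restricted_stirling_eq_sum:
  "fact k / fact N * restricted_stirling r N k = (\<Sum>j\<in>block_types r N k. block_type_coeff r j)"
proof -
  have "fact k * block_type_weight r j = block_type_coeff r j" if "j \<in> block_types r N k" for j
    using that fact_mult_block_type_weight[where r=r and j=j] by (simp add: block_types_def)
  then show ?thesis
    by (simp add: restricted_stirling_altdef sum_distrib_left)
qed

lemma in_Zp_block_type_coeff: "prime p \<Longrightarrow> in_Zp p (block_type_coeff (p - 1) j)"
  unfolding block_type_coeff_def
  using in_Zp_mult[OF _ in_Zp_of_nat in_Zp_inverse_of_nat[OF prime_not_dvd_prod_fact_power]]
  by simp

lemma block_type_coeff_cong_0: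
  assumes "prime p" "p ^ e dvd (\<Sum>m=1..p-1. j m)" "\<exists>m\<in>{1..p-1}. \<not> p ^ e dvd j m"
  shows "cong_Zp p (block_type_coeff (p - 1) j) 0"
proof -
  have "[multinomial {1..p-1} j = 0] (mod p)"
    using prime_dvd_multinomial[OF assms(1) _ assms(2,3)] by (simp add: cong_0_iff)
  then have "cong_Zp p (of_nat (multinomial {1..p-1} j) * (1 / of_nat (\<Prod>m=1..p-1. fact m ^ j m)))
      (of_nat 0 * (1 / of_nat (\<Prod>m=1..p-1. fact m ^ j m)))"
    using assms(1) prime_not_dvd_prod_fact_power
    by (intro cong_Zp_mult cong_Zp_of_nat cong_Zp_refl in_Zp_inverse_of_nat)
  then show ?thesis
    by (simp add: block_type_coeff_def)
qed

lemma block_type_coeff_scale_cong: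
  assumes "prime p"
  shows "cong_Zp p (block_type_coeff (p - 1) (\<lambda>m. p ^ e * j m)) (block_type_coeff (p - 1) j)"
proof -
  define P where "P = (\<Prod>m=1..p-1. fact m ^ j m :: nat)"
  have "(\<Prod>m=1..p-1. fact m ^ (p ^ e * j m) :: nat) = P ^ (p ^ e)"
    unfolding P_def by (simp add: power_mult mult.commute prod_power_distrib)
  moreover have "\<not> p dvd P ^ (p ^ e)"
    using prime_not_dvd_prod_fact_power[OF assms] assms prime_dvd_power unfolding P_def by blast
  ultimately have "cong_Zp p (1 / of_nat (\<Prod>m=1..p-1. fact m ^ (p ^ e * j m))) (1 / of_nat P)"
    by (metis cong_Zp_inverse_of_nat assms power_prime_power_cong)
  moreover have "cong_Zp p (of_nat (multinomial {1..p-1} (\<lambda>m. p ^ e * j m))) (of_nat (multinomial {1..p-1} j))"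
    using assms by (simp add: cong_Zp_of_nat multinomial_scale_prime_power_cong)
  ultimately show ?thesis
    unfolding block_type_coeff_def P_def using cong_Zp_mult[OF assms] by fastforce
qed

lemma block_types_scale:
  assumes "0 < q"
  shows "{j \<in> block_types r (q * T) (q * s). \<forall>m\<in>{1..r}. q dvd j m} = (\<lambda>i m. q * i m) ` block_types r T s"
proof -
  have sums: "(\<Sum>m=1..r. q * i m) = q * (\<Sum>m=1..r. i m)" "(\<Sum>m=1..r. m * (q * i m)) = q * (\<Sum>m=1..r. m * i m)"
    for i :: "nat \<Rightarrow> nat"
    by (simp_all add: sum_distrib_left mult.left_commute)
  have "j \<in> (\<lambda>i m. q * i m) ` block_types r T s"
    if j: "j \<in> block_types r (q * T) (q * s)" "\<forall>m\<in>{1..r}. q dvd j m" for j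
  proof -
    define i where "i m = j m div q" for m
    have j_eq: "j = (\<lambda>m. q * i m)"
    proof
      fix m
      show "j m = q * i m"
        using j by (cases "m \<in> {1..r}") (auto simp: block_types_def i_def)
    qed
    have "i \<in> block_types r T s"
      using j assms sums[of i] unfolding j_eq by (auto simp: block_types_def)
    with j_eq show ?thesis
      by blast
  qed
  then show ?thesis
    using sums by (auto simp: block_types_def)
qed

lemma in_Zp_scaled_restricted_stirling:
  "prime p \<Longrightarrow> in_Zp p (fact k / fact N * restricted_stirling (p - 1) N k)"
  unfolding scaled_restricted_stirling_eq_sum by (intro in_Zp_sum in_Zp_block_type_coeff)

lemma scaled_restricted_stirling_cong_0:
  assumes "prime p" "\<not> p ^ e dvd N"
  shows "cong_Zp p (fact (s * p ^ e) / fact N * restricted_stirling (p - 1) N (s * p ^ e)) 0"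
proof -
  have "cong_Zp p (block_type_coeff (p - 1) j) 0" if j: "j \<in> block_types (p - 1) N (s * p ^ e)" for j
  proof (rule block_type_coeff_cong_0[OF assms(1)])
    show "p ^ e dvd (\<Sum>m=1..p-1. j m)"
      using j by (simp add: block_types_def)
    show "\<exists>m\<in>{1..p-1}. \<not> p ^ e dvd j m"
    proof (rule ccontr)
      assume "\<not> ?thesis"
      then have "p ^ e dvd (\<Sum>m=1..p-1. m * j m)"
        by (auto intro: dvd_sum)
      then show False
        using j assms(2) by (simp add: block_types_def)
    qed
  qed
  then have "cong_Zp p (\<Sum>j\<in>block_types (p - 1) N (s * p ^ e). block_type_coeff (p - 1) j)
      (\<Sum>j\<in>block_types (p - 1) N (s * p ^ e). 0)"
    by (rule cong_Zp_sum[OF assms(1)])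
  then show ?thesis
    unfolding scaled_restricted_stirling_eq_sum by simp
qed

lemma scaled_restricted_stirling_cong_Stirling:
  assumes "prime p" "T < p"
  shows "cong_Zp p (fact (s * p ^ e) / fact (p ^ e * T) * restricted_stirling (p - 1) (p ^ e * T) (s * p ^ e))
    (fact s / fact T * of_nat (Stirling T s))"
proof -
  define q where "q = p ^ e"
  define A where "A = block_types (p - 1) (q * T) (q * s)"
  define G where "G = {j \<in> A. \<forall>m\<in>{1..p-1}. q dvd j m}"
  have q: "0 < q"
    using assms(1) by (simp add: q_def prime_gt_0_nat)
  have "cong_Zp p (\<Sum>j\<in>A - G. block_type_coeff (p - 1) j) (\<Sum>j\<in>A - G. 0)"
    using assms(1) by (intro cong_Zp_sum block_type_coeff_cong_0) (auto simp: A_def G_def q_def block_types_def)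
  moreover have "cong_Zp p (\<Sum>j\<in>G. block_type_coeff (p - 1) j) (fact s / fact T * of_nat (Stirling T s))"
  proof -
    have "(\<Sum>j\<in>G. block_type_coeff (p - 1) j) = (\<Sum>i\<in>block_types (p - 1) T s. block_type_coeff (p - 1) (\<lambda>m. q * i m))"
      unfolding G_def A_def block_types_scale[OF q]
      by (rule sum.reindex_cong[OF _ refl refl]) (use q in \<open>auto simp: inj_on_def fun_eq_iff\<close>)
    moreover have "cong_Zp p (\<Sum>i\<in>block_types (p - 1) T s. block_type_coeff (p - 1) (\<lambda>m. q * i m))
        (\<Sum>i\<in>block_types (p - 1) T s. block_type_coeff (p - 1) i)"
      unfolding q_def using assms(1) by (intro cong_Zp_sum block_type_coeff_scale_cong)
    moreover have "(\<Sum>i\<in>block_types (p - 1) T s. block_type_coeff (p - 1) i) = fact s / fact T * of_nat (Stirling T s)"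
      using assms(2) by (simp flip: scaled_restricted_stirling_eq_sum add: restricted_stirling_eq_Stirling)
    ultimately show ?thesis
      by simp
  qed
  ultimately have "cong_Zp p ((\<Sum>j\<in>A - G. block_type_coeff (p - 1) j) + (\<Sum>j\<in>G. block_type_coeff (p - 1) j))
      (0 + fact s / fact T * of_nat (Stirling T s))"
    using cong_Zp_add[OF assms(1)] by fastforce
  moreover have "(\<Sum>j\<in>A. block_type_coeff (p - 1) j)
      = (\<Sum>j\<in>A - G. block_type_coeff (p - 1) j) + (\<Sum>j\<in>G. block_type_coeff (p - 1) j)"
    by (rule sum.subset_diff) (auto simp: A_def G_def finite_block_types)
  ultimately have "cong_Zp p (\<Sum>j\<in>A. block_type_coeff (p - 1) j) (fact s / fact T * of_nat (Stirling T s))"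
    by simp
  then show ?thesis
    unfolding scaled_restricted_stirling_eq_sum A_def q_def by (simp add: mult.commute)
qed

theorem lemma3p14:
  fixes p n s t :: nat
  assumes "prime p" and "odd p" and "n \<ge> 2"
    and "1 \<le> s" and "s \<le> p - 1"
    and "s * p ^ (n - 2) \<le> t" and "t \<le> p ^ (n - 1) - 1"
  shows "in_Zp p (fact (s * p ^ (n - 2)) / fact t * restricted_stirling (p - 1) t (s * p ^ (n - 2)))
    \<and> (\<not> p ^ (n - 2) dvd t \<longrightarrow>
         cong_Zp p (fact (s * p ^ (n - 2)) / fact t * restricted_stirling (p - 1) t (s * p ^ (n - 2))) 0)
    \<and> (p ^ (n - 2) dvd t \<longrightarrow>
         cong_Zp p (fact (s * p ^ (n - 2)) / fact t * restricted_stirling (p - 1) t (s * p ^ (n - 2)))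
           (fact s / fact (t div p ^ (n - 2)) * of_nat (Stirling (t div p ^ (n - 2)) s)))"
proof (intro conjI impI)
  let ?X = "fact (s * p ^ (n - 2)) / fact t * restricted_stirling (p - 1) t (s * p ^ (n - 2))"
  show "in_Zp p ?X"
    using assms(1) by (rule in_Zp_scaled_restricted_stirling)
  show "cong_Zp p ?X 0" if "\<not> p ^ (n - 2) dvd t"
    using assms(1) that by (rule scaled_restricted_stirling_cong_0)
  assume dvd: "p ^ (n - 2) dvd t"
  have "0 < p ^ (n - 1)"
    using assms(1) by (simp add: prime_gt_0_nat)
  then have "t < p ^ (n - 1)"
    using assms(7) by linarith
  also have "p ^ (n - 1) = p ^ (n - 2) * p"
    using assms(3) by (simp flip: power_Suc2 add: Suc_diff_Suc numeral_2_eq_2)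
  finally have "t div p ^ (n - 2) < p"
    by (simp add: div_less_iff_less_mult prime_gt_0_nat[OF assms(1)] mult.commute)
  from scaled_restricted_stirling_cong_Stirling[OF assms(1) this, of s "n - 2"]
  show "cong_Zp p ?X (fact s / fact (t div p ^ (n - 2)) * of_nat (Stirling (t div p ^ (n - 2)) s))"
    using dvd by simp
qed

end
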